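(* Let $n$ be a positive integer and let $F_R(n)$ be the $n\times n$ Fibonacci--Redheffer matrix. If $\lambda_1,\lambda_2,\ldots,\lambda_n$ are the $n$ (not necessarily distinct) eigenvalues of $F_R(n)$, then \[ \det(F_R(n))=\prod_{j=1}^{n}\lambda_j = n!_F\sum_{k=1}^{n}\frac{\mu(k)}{F_k}. \]
   Context: The Fibonacci numbers are $F_1=F_2=1$, $F_n=F_{n-1}+F_{n-2}$ for $n\ge 3$. The Fibonacci--Redheffer matrix $F_R(n)=[F_R(i,j)]_{i,j=1}^n$ is defined by $F_R(i,j)=1$ if $j=1$; $F_R(i,j)=F_i$ if $i\mid j$; and $F_R(i,j)=0$ otherwise (for $i=j=1$ both rules give $1$). The Fibonacci factorial is $n!_F=\prod_{i=1}^n F_i$. $\mu$ denotes the Möbius function: $\mu(1)=1$, $\mu(j)=0$ if $j$ has a repeated prime factor, and $\mu(j)=(-1)^k$ if $j$ is a product of $k$ distinct primes. *)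

theory Defs
  imports "Jordan_Normal_Form.Char_Poly" "HOL-Number_Theory.Fib"
    "HOL-Computational_Algebra.Squarefree"
begin

text \<open>Fibonacci numbers: library fib, with fib 1 = fib 2 = 1.\<close>

definition fib_fact :: "nat \<Rightarrow> nat" where
  "fib_fact n = (\<Prod>i=1..n. fib i)"

definition moebius :: "nat \<Rightarrow> int" where
  "moebius j = (if j = 0 then 0
                else if squarefree j then (-1) ^ card (prime_factors j) else 0)"

text \<open>Fibonacci--Redheffer matrix, 0-based indices: entry (i,j) here is
  entry (i+1,j+1) of the paper.\<close>
definition FR_mat :: "nat \<Rightarrow> 'a :: comm_ring_1 mat" where
  "FR_mat n = mat n n (\<lambda>(i,j). if j = 0 then 1
                           else if Suc i dvd Suc j then of_nat (fib (Suc i)) else 0)"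

end

theory Submission imports Defs begin

text \<open>Let \<open>W\<close> be the upper triangular matrix with entries \<open>\<mu>(j/i) / F\<^sub>j\<close> for \<open>i | j\<close>.
  Since the Moebius matrix inverts the divisibility pattern of \<open>F\<^sub>R(n)\<close>, the product
  \<open>W F\<^sub>R(n)\<close> is the identity except for its first column, whose top entry is
  \<open>\<Sum>\<^sub>k \<mu>(k) / F\<^sub>k\<close>. Hence \<open>det W \<cdot> det F\<^sub>R(n) = \<Sum>\<^sub>k \<mu>(k) / F\<^sub>k\<close> with
  \<open>det W = 1 / n!\<^sub>F\<close>. The determinant is the product of the eigenvalues because it is,
  up to the sign \<open>(-1)\<^sup>n\<close>, the constant term of the characteristic polynomial.\<close>

lemma moebius_prime_mult:
  assumes p: "prime p" and "\<not> p dvd d" and "d > 0"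
  shows "moebius (p * d) = - moebius d"
proof -
  have "coprime p d" using assms by (simp add: prime_imp_coprime)
  then have "squarefree (p * d) \<longleftrightarrow> squarefree d"
    using squarefree_mult_coprime squarefree_prime[OF p] squarefree_mono[of d "p * d"] by auto
  moreover have "prime_factors (p * d) = insert p (prime_factors d)"
    using assms by (simp add: prime_factorization_mult prime_factorization_prime)
  moreover have "p \<notin> prime_factors d" using assms by auto
  ultimately show ?thesis using assms prime_gt_0_nat[OF p] by (simp add: moebius_def)
qed

lemma sum_moebius_divisors:
  assumes "m > 0"
  shows "(\<Sum>d | d dvd m. moebius d) = (if m = 1 then 1 else 0)"
proof (cases "m = 1")
  case True
  then show ?thesis by (simp add: moebius_def)
next
  case False
  then obtain p where p: "prime p" "p dvd m" using assms prime_factor_nat by blast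
  define A where "A = {d. d dvd m \<and> \<not> p dvd d}"
  define B where "B = {d. d dvd m \<and> p dvd d}"
  have fin: "finite A" "finite B" unfolding A_def B_def using assms by auto
  have "(*) p ` A \<subseteq> B"
    using p by (auto simp: A_def B_def prime_imp_coprime divides_mult)
  moreover have "moebius x = 0" if x: "x \<in> B - (*) p ` A" for x
  proof -
    obtain e where e: "x = p * e" "e dvd m"
      using x unfolding B_def by (metis (mono_tags) Diff_iff dvd_mult_right dvdE mem_Collect_eq)
    then have "p dvd e" using x by (auto simp: A_def)
    then have "p\<^sup>2 dvd x" using e by (auto simp: power2_eq_square)
    then have "\<not> squarefree x" using p by (intro not_squarefreeI) auto
    then show ?thesis by (simp add: moebius_def)
  qed
  ultimately have "sum moebius B = (\<Sum>d\<in>A. moebius (p * d))"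
    using fin prime_gt_0_nat[OF p(1)]
    by (subst sum.mono_neutral_right[of B "(*) p ` A"]) (auto simp: sum.reindex inj_on_def)
  also have "\<dots> = (\<Sum>d\<in>A. - moebius d)"
    using p assms by (intro sum.cong) (auto simp: A_def moebius_prime_mult dvd_pos_nat)
  also have "\<dots> = - sum moebius A"
    by (simp add: sum_negf)
  finally have "sum moebius (A \<union> B) = 0"
    using fin by (subst sum.union_disjoint) (auto simp: A_def B_def)
  moreover have "A \<union> B = {d. d dvd m}" by (auto simp: A_def B_def)
  ultimately show ?thesis using False by simp
qed

lemma sum_moebius_dvd_between:
  assumes "a > 0" "b > 0" "b \<le> n"
  shows "(\<Sum>k=1..n. if a dvd k \<and> k dvd b then of_int (moebius (k div a)) else 0)
       = (if a = b then 1 else (0 :: 'a :: comm_ring_1))"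
proof (cases "a dvd b")
  case False
  then show ?thesis by (auto intro!: sum.neutral dest: dvd_trans)
next
  case True
  then obtain m where m: "b = a * m" by auto
  then have "m > 0" using assms by (cases m) auto
  have "{k \<in> {1..n}. a dvd k \<and> k dvd b} = (*) a ` {e. e dvd m}"
  proof (intro equalityI subsetI)
    fix k assume "k \<in> {k \<in> {1..n}. a dvd k \<and> k dvd b}"
    then show "k \<in> (*) a ` {e. e dvd m}" using m assms by auto
  next
    fix k assume "k \<in> (*) a ` {e. e dvd m}"
    then obtain e where "k = a * e" "e dvd m" by auto
    moreover have "a * e \<le> n"
      using \<open>e dvd m\<close> \<open>m > 0\<close> m assms(3)
      by (meson dual_order.trans dvd_imp_le mult_le_mono2)
    ultimately show "k \<in> {k \<in> {1..n}. a dvd k \<and> k dvd b}"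
      using m assms \<open>m > 0\<close> by (auto intro: dvd_pos_nat)
  qed
  then have "(\<Sum>k=1..n. if a dvd k \<and> k dvd b then of_int (moebius (k div a)) else 0)
           = (\<Sum>e | e dvd m. (of_int (moebius e) :: 'a))"
    using assms by (simp add: sum.inter_filter[symmetric] sum.reindex inj_on_def)
  also have "\<dots> = of_int (if m = 1 then 1 else 0)"
    by (simp flip: of_int_sum add: sum_moebius_divisors[OF \<open>m > 0\<close>])
  finally show ?thesis using m assms by auto
qed

definition moebius_fib_mat :: "nat \<Rightarrow> 'a :: field mat" where
  "moebius_fib_mat n = mat n n (\<lambda>(i,j). if Suc i dvd Suc j
      then of_int (moebius (Suc j div Suc i)) / of_nat (fib (Suc j)) else 0)"

definition first_col_mat :: "nat \<Rightarrow> (nat \<Rightarrow> 'a) \<Rightarrow> 'a :: zero_neq_one mat" where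
  "first_col_mat n v = mat n n (\<lambda>(i,j). if j = 0 then v i else if i = j then 1 else 0)"

lemma det_first_col_mat:
  assumes "n > 0"
  shows "det (first_col_mat n v :: 'a :: comm_ring_1 mat) = v 0"
proof -
  have "det (first_col_mat n v) = (\<Prod>i=0..<n. first_col_mat n v $$ (i,i))"
    by (subst det_lower_triangular[of n]) (auto simp: first_col_mat_def prod_list_diag_prod)
  also have "\<dots> = first_col_mat n v $$ (0,0)"
    using assms by (subst prod.remove[of _ 0]) (auto simp: first_col_mat_def intro!: prod.neutral)
  finally show ?thesis using assms by (simp add: first_col_mat_def)
qed

lemma moebius_fib_mat_mult_FR_mat:
  "moebius_fib_mat n * (FR_mat n :: 'a :: field_char_0 mat)
     = first_col_mat n (\<lambda>i. \<Sum>k<n. moebius_fib_mat n $$ (i,k))" (is "_ = ?E")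
proof (rule eq_matI)
  fix i j assume "i < dim_row ?E" and "j < dim_col ?E"
  then have i: "i < n" and j: "j < n" by (auto simp: first_col_mat_def)
  have fib_nz: "(of_nat (fib (Suc k)) :: 'a) \<noteq> 0" for k
    using fib_neq_0_nat[of "Suc k"] by simp
  have "(moebius_fib_mat n * FR_mat n) $$ (i,j)
      = (\<Sum>k<n. moebius_fib_mat n $$ (i,k) * (FR_mat n :: 'a mat) $$ (k,j))"
    using i j by (simp add: moebius_fib_mat_def FR_mat_def scalar_prod_def lessThan_atLeast0 ac_simps)
  also have "\<dots> = ?E $$ (i,j)"
  proof (cases "j = 0")
    case True
    then show ?thesis using i j by (simp add: FR_mat_def first_col_mat_def)
  next
    case False
    have "(\<Sum>k<n. moebius_fib_mat n $$ (i,k) * (FR_mat n :: 'a mat) $$ (k,j))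
        = (\<Sum>k<n. if Suc i dvd Suc k \<and> Suc k dvd Suc j
                   then of_int (moebius (Suc k div Suc i)) else 0)"
      using False i j fib_nz by (intro sum.cong) (auto simp: moebius_fib_mat_def FR_mat_def)
    also have "\<dots> = (if Suc i = Suc j then 1 else 0)"
      using sum_moebius_dvd_between[of "Suc i" "Suc j" n] j by (simp add: sum.atLeast1_atMost_eq)
    finally show ?thesis using False i j by (simp add: first_col_mat_def)
  qed
  finally show "(moebius_fib_mat n * FR_mat n) $$ (i,j) = ?E $$ (i,j)" .
qed (simp_all add: moebius_fib_mat_def FR_mat_def first_col_mat_def)

lemma det_moebius_fib_mat: "det (moebius_fib_mat n :: 'a :: field mat) = 1 / of_nat (fib_fact n)"
proof -
  have "det (moebius_fib_mat n :: 'a mat) = (\<Prod>i=0..<n. moebius_fib_mat n $$ (i,i))"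
    by (subst det_upper_triangular[of _ n])
       (auto simp: upper_triangular_def moebius_fib_mat_def prod_list_diag_prod dest: dvd_imp_le)
  also have "\<dots> = (\<Prod>i<n. 1 / of_nat (fib (Suc i)))"
    by (simp add: moebius_fib_mat_def moebius_def lessThan_atLeast0)
  also have "\<dots> = 1 / of_nat (fib_fact n)"
    by (simp add: prod_dividef fib_fact_def of_nat_prod prod.atLeast1_atMost_eq)
  finally show ?thesis .
qed

lemma det_FR_mat:
  assumes "n > 0"
  shows "det (FR_mat n :: 'a :: field_char_0 mat)
       = of_nat (fib_fact n) * (\<Sum>k=1..n. of_int (moebius k) / of_nat (fib k))"
proof -
  have "fib_fact n \<noteq> 0" by (simp add: fib_fact_def fib_neq_0_nat)
  have "det (moebius_fib_mat n) * det (FR_mat n :: 'a mat) = det (moebius_fib_mat n * FR_mat n)"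
    by (rule det_mult[of _ n, symmetric]) (simp_all add: moebius_fib_mat_def FR_mat_def)
  also have "\<dots> = det (first_col_mat n (\<lambda>i. \<Sum>k<n. moebius_fib_mat n $$ (i,k)))"
    by (simp only: moebius_fib_mat_mult_FR_mat)
  also have "\<dots> = (\<Sum>k<n. of_int (moebius (Suc k)) / of_nat (fib (Suc k)))"
    using assms by (simp add: det_first_col_mat moebius_fib_mat_def)
  finally show ?thesis
    using \<open>fib_fact n \<noteq> 0\<close> by (simp add: det_moebius_fib_mat sum.atLeast1_atMost_eq field_simps)
qed

lemma poly_char_poly_0:
  assumes "(A :: 'a :: field mat) \<in> carrier_mat n n"
  shows "poly (char_poly A) 0 = (-1) ^ n * det A"
proof -
  have "- char_matrix A 0 = (-1) \<cdot>\<^sub>m A"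
    using assms by (intro eq_matI) (auto simp: char_matrix_def)
  then show ?thesis using assms by (simp add: char_poly_matrix)
qed

lemma det_eq_prod_list_eigenvalues:
  assumes "(A :: 'a :: field mat) \<in> carrier_mat n n" and "length lambdas = n"
    and "char_poly A = (\<Prod>a \<leftarrow> lambdas. [:- a, 1:])"
  shows "det A = prod_list lambdas"
proof -
  have "poly (\<Prod>a \<leftarrow> lambdas. [:- a, 1:]) 0 = (-1) ^ length lambdas * prod_list lambdas"
    by (induction lambdas) auto
  then show ?thesis using assms poly_char_poly_0[OF assms(1)] by simp
qed

theorem theorem1:
  fixes n :: nat and lambdas :: "complex list"
  assumes "n \<ge> 1"
    and "length lambdas = n"
    and "char_poly (FR_mat n :: complex mat) = (\<Prod>a \<leftarrow> lambdas. [:- a, 1:])"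
  shows "det (FR_mat n :: complex mat) = prod_list lambdas
       \<and> prod_list lambdas =
           of_nat (fib_fact n) * (\<Sum>k=1..n. of_int (moebius k) / of_nat (fib k))"
proof -
  have "det (FR_mat n :: complex mat) = prod_list lambdas"
    using assms(2,3) by (intro det_eq_prod_list_eigenvalues[of _ n]) (simp_all add: FR_mat_def)
  with det_FR_mat[where 'a = complex] show ?thesis using assms(1) by simp
qed

end
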